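(* Let $c>0$, $n\ge 2$, and let $\mathbb{R}^n_c=\{\mathbf{v}\in\mathbb{R}^n:\|\mathbf{v}\|<c\}$ be equipped with Möbius addition $\oplus$, Möbius scalar multiplication $\otimes$ and Möbius coaddition $\boxplus$ (defined in the context). Let $A,B\in\mathbb{R}^n_c$ be distinct and, for $t\in\mathbb{R}$, define $$P_{AB}(t)=\tfrac12\otimes A\;\boxplus\;\Big\{\tfrac12\otimes A\oplus\Big[\big(\ominus\tfrac12\otimes A\oplus(B\ominus\tfrac12\otimes A)\big)\otimes t\Big]\Big\}.$$ Then $\{P_{AB}(t):t\in\mathbb{R}\}$ is the unique Euclidean straight line through $A$ and $B$ (intersected with the ball $\mathbb{R}^n_c$), i.e. it equals the set of points of $\mathbb{R}^n_c$ lying on the Euclidean line through $A$ and $B$.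
   Context: Möbius addition in the ball $\mathbb{R}^n_c$ is $$\mathbf{u}\oplus\mathbf{v}=\frac{\big(1+\frac{2}{c^2}\mathbf{u}\cdot\mathbf{v}+\frac{1}{c^2}\|\mathbf{v}\|^2\big)\mathbf{u}+\big(1-\frac{1}{c^2}\|\mathbf{u}\|^2\big)\mathbf{v}}{1+\frac{2}{c^2}\mathbf{u}\cdot\mathbf{v}+\frac{1}{c^4}\|\mathbf{u}\|^2\|\mathbf{v}\|^2},$$ with $\ominus\mathbf{v}=-\mathbf{v}$ and $\mathbf{u}\ominus\mathbf{v}=\mathbf{u}\oplus(-\mathbf{v})$. Scalar multiplication: for $r\in\mathbb{R}$ and $\mathbf{v}\neq\mathbf{0}$, $r\otimes\mathbf{v}=\mathbf{v}\otimes r=c\tanh\!\big(r\tanh^{-1}(\|\mathbf{v}\|/c)\big)\frac{\mathbf{v}}{\|\mathbf{v}\|}$, and $r\otimes\mathbf{0}=\mathbf{0}$; scalar multiplication binds more tightly than $\oplus,\ominus,\boxplus$. The gyration generated by $\mathbf{u},\mathbf{v}$ is $\mathrm{gyr}[\mathbf{u},\mathbf{v}]\mathbf{w}=\ominus(\mathbf{u}\oplus\mathbf{v})\oplus\big(\mathbf{u}\oplus(\mathbf{v}\oplus\mathbf{w})\big)$. Möbius coaddition is $\mathbf{a}\boxplus\mathbf{b}=\mathbf{a}\oplus\mathrm{gyr}[\mathbf{a},\ominus\mathbf{b}]\mathbf{b}$. *)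

theory Defs
  imports "HOL-Analysis.Analysis"
begin

definition mobius_add :: "real \<Rightarrow> 'a::real_inner \<Rightarrow> 'a \<Rightarrow> 'a" where
  "mobius_add c u v =
     (1 / (1 + (2 / c^2) * (u \<bullet> v) + (1 / c^4) * (norm u)^2 * (norm v)^2)) *\<^sub>R
     ((1 + (2 / c^2) * (u \<bullet> v) + (1 / c^2) * (norm v)^2) *\<^sub>R u
      + (1 - (1 / c^2) * (norm u)^2) *\<^sub>R v)"

definition mobius_sub :: "real \<Rightarrow> 'a::real_inner \<Rightarrow> 'a \<Rightarrow> 'a" where
  "mobius_sub c u v = mobius_add c u (- v)"

definition mobius_smult :: "real \<Rightarrow> real \<Rightarrow> 'a::real_inner \<Rightarrow> 'a" where
  "mobius_smult c r v =
     (if v = 0 then 0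
      else (c * tanh (r * artanh (norm v / c))) *\<^sub>R ((1 / norm v) *\<^sub>R v))"

definition mobius_gyr :: "real \<Rightarrow> 'a::real_inner \<Rightarrow> 'a \<Rightarrow> 'a \<Rightarrow> 'a" where
  "mobius_gyr c u v w = mobius_add c (- (mobius_add c u v)) (mobius_add c u (mobius_add c v w))"

definition mobius_coadd :: "real \<Rightarrow> 'a::real_inner \<Rightarrow> 'a \<Rightarrow> 'a" where
  "mobius_coadd c a b = mobius_add c a (mobius_gyr c a (- b) b)"

definition P_AB :: "real \<Rightarrow> 'a::real_inner \<Rightarrow> 'a \<Rightarrow> real \<Rightarrow> 'a" where
  "P_AB c A B t =
     (let h = mobius_smult c (1/2) A
      in mobius_coadd c h
           (mobius_add c h
              (mobius_smult c t (mobius_add c (- h) (mobius_sub c B h)))))"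

end

theory Submission
  imports Defs
begin

text \<open>
  Map the ball to the hyperboloid model. In these coordinates Moebius addition \<open>h \<oplus> x\<close> is a
  Lorentz boost, and a computation through the gyration gives
  \<open>a \<boxplus> b = (S a + S b) / (T a + T b)\<close>, where \<open>T\<close> and \<open>S\<close> are the time and (scaled)
  space coordinates; in particular \<open>S h / T h\<close> is the Klein-model image of \<open>h\<close>, and for
  \<open>h = 1/2 \<otimes> A\<close> this is \<open>A\<close> itself. Writing \<open>t \<otimes> u = tanh (t\<theta>) e\<close> with \<open>|e| = c\<close>,
  the boost turns \<open>P\<^sub>A\<^sub>B(t) = h \<boxplus> (h \<oplus> \<tau> e)\<close>, \<open>\<tau> = tanh (t\<theta>)\<close>, into
  \<open>(S h + \<tau> W) / (T h + \<tau> g)\<close> for a fixed vector \<open>W\<close> and scalar \<open>g\<close>: a projective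
  reparametrisation of a straight line through \<open>A\<close>. As \<open>\<tau>\<close> runs through \<open>(-1, 1)\<close>, the
  parameter \<open>\<tau> / (T h + \<tau> g)\<close> sweeps exactly the chord of the ball on that line, and
  \<open>P\<^sub>A\<^sub>B(1) = B\<close> identifies the line as \<open>AB\<close>.
\<close>

section \<open>Hyperboloid coordinates\<close>

text \<open>\<open>(hyp_time c x, hyp_space c x / c)\<close> is the point of the hyperboloid \<open>t\<^sup>2 - |X|\<^sup>2 = 1\<close>
  corresponding to the point \<open>x\<close> of the ball of radius \<open>c\<close>.\<close>

definition hyp_time :: "real \<Rightarrow> 'a::real_inner \<Rightarrow> real" where
  "hyp_time c x = (1 + (norm x)^2 / c^2) / (1 - (norm x)^2 / c^2)"

definition hyp_space :: "real \<Rightarrow> 'a::real_inner \<Rightarrow> 'a" where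
  "hyp_space c x = (2 / (1 - (norm x)^2 / c^2)) *\<^sub>R x"

lemma norm_sq_div_less_1:
  assumes "c > 0" "norm (x::'a::real_normed_vector) < c"
  shows "(norm x)^2 / c^2 < 1"
  using assms by (simp add: power_strict_mono)

lemma hyp_time_ge_1:
  assumes "c > 0" "norm (x::'a::real_inner) < c"
  shows "hyp_time c x \<ge> 1"
  using norm_sq_div_less_1[OF assms] unfolding hyp_time_def by (simp add: field_simps)

lemma inner_hyp_space_self:
  assumes "c > 0" "norm (x::'a::real_inner) < c"
  shows "(hyp_space c x \<bullet> hyp_space c x) / c^2 = (hyp_time c x)^2 - 1"
proof -
  define q where "q = (norm x)^2 / c^2"
  have "q < 1" using norm_sq_div_less_1[OF assms] by (simp add: q_def)
  have "(2 / r)^2 * (1 - r) = ((2 - r) / r)^2 - 1" if "r \<noteq> 0" for r :: real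
    using that by (simp add: field_simps power2_eq_square)
  from this[of "1 - q"] \<open>q < 1\<close> have "(2 / (1 - q))^2 * q = ((1 + q) / (1 - q))^2 - 1"
    by simp
  moreover have "hyp_space c x \<bullet> hyp_space c x = (2 / (1 - q))^2 * (norm x)^2"
    by (simp add: hyp_space_def q_def power2_eq_square flip: power2_norm_eq_inner)
  moreover have "hyp_time c x = (1 + q) / (1 - q)"
    by (simp add: hyp_time_def q_def)
  ultimately show ?thesis
    by (simp add: q_def)
qed

lemma scaleR_hyp_space_eq:
  assumes "c > 0" "norm (x::'a::real_inner) < c"
  shows "(1 / (1 + hyp_time c x)) *\<^sub>R hyp_space c x = x"
proof -
  define q where "q = (norm x)^2 / c^2"
  have "q < 1" using norm_sq_div_less_1[OF assms] by (simp add: q_def)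
  then have "1 / (1 + (1 + q) / (1 - q)) * (2 / (1 - q)) = 1"
    by (simp add: field_simps)
  then have "1 / (1 + hyp_time c x) * (2 / (1 - (norm x)^2 / c^2)) = 1"
    by (simp add: hyp_time_def q_def)
  then show ?thesis by (simp add: hyp_space_def)
qed

lemma hyp_coords_inject:
  assumes "c > 0" "norm (x::'a::real_inner) < c" "norm y < c"
    and "hyp_time c x = hyp_time c y" "hyp_space c x = hyp_space c y"
  shows "x = y"
  by (metis scaleR_hyp_space_eq assms)

lemma hyp_space_div_hyp_time:
  assumes "c > 0" "norm (x::'a::real_inner) < c"
  shows "(1 / hyp_time c x) *\<^sub>R hyp_space c x = (2 / (1 + (norm x)^2 / c^2)) *\<^sub>R x"
proof -
  define q where "q = (norm x)^2 / c^2"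
  have "0 \<le> q" "q < 1" using norm_sq_div_less_1[OF assms] by (simp_all add: q_def)
  then have "1 / ((1 + q) / (1 - q)) * (2 / (1 - q)) = 2 / (1 + q)"
    by (simp add: divide_simps)
  then show ?thesis by (simp add: hyp_space_def hyp_time_def q_def[symmetric])
qed

lemma hyp_space_minus [simp]: "hyp_space c (- x) = - hyp_space c x"
  by (simp add: hyp_space_def)

lemma hyp_time_minus [simp]: "hyp_time c (- x) = hyp_time c x"
  by (simp add: hyp_time_def)

section \<open>Moebius addition as a Lorentz boost\<close>

lemma mobius_add_eq:
  fixes h x :: "'a::real_inner"
  assumes "c > 0"
  defines "qh \<equiv> (norm h)^2 / c^2" and "qx \<equiv> (norm x)^2 / c^2" and "p \<equiv> (h \<bullet> x) / c^2"
  shows "mobius_add c h x = (1 / (1 + 2*p + qh*qx)) *\<^sub>R ((1 + 2*p + qx) *\<^sub>R h + (1 - qh) *\<^sub>R x)"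
proof -
  have "(2 / c^2) * (h \<bullet> x) = 2*p" "(1 / c^4) * (norm h)^2 * (norm x)^2 = qh*qx"
    "(1 / c^2) * (norm x)^2 = qx" "(1 / c^2) * (norm h)^2 = qh"
    using assms(1) by (simp_all add: p_def qh_def qx_def power2_eq_square eval_nat_numeral)
  then show ?thesis unfolding mobius_add_def by simp
qed

lemma mobius_add_denominator_pos:
  fixes h x :: "'a::real_inner"
  assumes "c > 0" "norm h < c" "norm x < c"
  defines "qh \<equiv> (norm h)^2 / c^2" and "qx \<equiv> (norm x)^2 / c^2" and "p \<equiv> (h \<bullet> x) / c^2"
  shows "1 + 2*p + qh*qx > 0"
proof -
  have qh: "0 \<le> qh" "qh < 1" and qx: "0 \<le> qx" "qx < 1"
    using norm_sq_div_less_1[OF assms(1,2)] norm_sq_div_less_1[OF assms(1,3)]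
    by (auto simp: qh_def qx_def)
  have "(h \<bullet> x)^2 \<le> (norm h)^2 * (norm x)^2"
    using Cauchy_Schwarz_ineq[of h x] by (simp add: power2_norm_eq_inner)
  then have "p^2 \<le> qh * qx"
    using assms(1) by (simp add: p_def qh_def qx_def power_divide field_simps power2_eq_square)
  moreover have "qh * qx < 1"
    using mult_left_le[of qx qh] qh qx by linarith
  moreover have "(1 + qh*qx)^2 - 4 * (qh*qx) = (1 - qh*qx)^2"
    by (simp add: power2_eq_square algebra_simps)
  moreover have "(1 - qh*qx)^2 > 0" "\<bar>2*p\<bar>^2 = 4 * p^2"
    using \<open>qh * qx < 1\<close> by (simp_all add: power_mult_distrib)
  ultimately have "\<bar>2*p\<bar>^2 < (1 + qh*qx)^2"
    by linarith
  moreover have "0 \<le> 1 + qh*qx" using qh qx by simp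
  ultimately have "\<bar>2*p\<bar> < 1 + qh*qx"
    by (rule power_less_imp_less_base)
  then show ?thesis by linarith
qed

lemma one_minus_norm_mobius_add:
  fixes h x :: "'a::real_inner"
  assumes "c > 0"
  defines "qh \<equiv> (norm h)^2 / c^2" and "qx \<equiv> (norm x)^2 / c^2" and "p \<equiv> (h \<bullet> x) / c^2"
  assumes "1 + 2*p + qh*qx \<noteq> 0"
  shows "1 - (norm (mobius_add c h x))^2 / c^2 = (1 - qh) * (1 - qx) / (1 + 2*p + qh*qx)"
proof -
  define d where "d = 1 + 2*p + qh*qx"
  define a where "a = 1 + 2*p + qx"
  define b where "b = 1 - qh"
  have "(norm (a *\<^sub>R h + b *\<^sub>R x))^2 = a^2 * (norm h)^2 + 2*a*b*(h \<bullet> x) + b^2 * (norm x)^2"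
    unfolding power2_norm_eq_inner
    by (simp add: inner_add_left inner_add_right inner_commute[of x h] power2_eq_square algebra_simps)
  then have "(norm (a *\<^sub>R h + b *\<^sub>R x))^2 / c^2 = a^2 * qh + 2*a*b*p + b^2 * qx"
    using assms(1) by (simp add: qh_def qx_def p_def add_divide_distrib)
  also have "\<dots> = d^2 - (1 - qh) * (1 - qx) * d"
    by (simp add: a_def b_def d_def power2_eq_square algebra_simps)
  finally have v: "(norm (a *\<^sub>R h + b *\<^sub>R x))^2 / c^2 = d^2 - (1 - qh) * (1 - qx) * d" .
  have "(norm (mobius_add c h x))^2 / c^2 = (1/d)^2 * ((norm (a *\<^sub>R h + b *\<^sub>R x))^2 / c^2)"
    unfolding mobius_add_eq[OF assms(1)] qh_def[symmetric] qx_def[symmetric] p_def[symmetric]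
      d_def[symmetric] a_def[symmetric] b_def[symmetric]
    by (simp only: norm_scaleR power_mult_distrib power2_abs times_divide_eq_right)
  moreover have "d \<noteq> 0" using assms(5) unfolding d_def .
  then have "(1/d)^2 * (d^2 - k * d) = 1 - k / d" for k
    by (simp add: field_simps power2_eq_square)
  ultimately show ?thesis
    unfolding v d_def[symmetric] by simp
qed

lemma mobius_add_in_ball:
  fixes h x :: "'a::real_inner"
  assumes "c > 0" "norm h < c" "norm x < c"
  shows "norm (mobius_add c h x) < c"
proof -
  have "1 - (norm (mobius_add c h x))^2 / c^2 > 0"
    using mobius_add_denominator_pos[OF assms] norm_sq_div_less_1[OF assms(1,2)]
      norm_sq_div_less_1[OF assms(1,3)]
    by (simp add: one_minus_norm_mobius_add[OF assms(1)])
  then have "(norm (mobius_add c h x))^2 < c^2" using assms(1) by (simp add: field_simps)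
  then show ?thesis using assms(1) by (simp add: power2_less_imp_less)
qed

lemma hyp_coords_mobius_add_eq:
  fixes h x :: "'a::real_inner"
  assumes "c > 0" "norm h < c" "norm x < c"
  defines "qh \<equiv> (norm h)^2 / c^2" and "qx \<equiv> (norm x)^2 / c^2" and "p \<equiv> (h \<bullet> x) / c^2"
  shows "hyp_time c (mobius_add c h x) = 2 * (1 + 2*p + qh*qx) / ((1 - qh) * (1 - qx)) - 1"
    and "hyp_space c (mobius_add c h x) = (2 / ((1 - qh) * (1 - qx))) *\<^sub>R ((1 + 2*p + qx) *\<^sub>R h + (1 - qh) *\<^sub>R x)"
proof -
  define d where "d = 1 + 2*p + qh*qx"
  have d: "d > 0"
    using mobius_add_denominator_pos[OF assms(1-3)] by (simp add: d_def qh_def qx_def p_def)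
  define k where "k = (1 - qh) * (1 - qx)"
  have "qh < 1" "qx < 1"
    using norm_sq_div_less_1[OF assms(1,2)] norm_sq_div_less_1[OF assms(1,3)] by (simp_all add: qh_def qx_def)
  then have k: "k \<noteq> 0" by (simp add: k_def)
  have "1 - (norm (mobius_add c h x))^2 / c^2 = k / d"
    unfolding qh_def qx_def p_def d_def k_def
    by (rule one_minus_norm_mobius_add[OF assms(1)]) (use d in \<open>simp add: d_def qh_def qx_def p_def\<close>)
  then have "hyp_time c (mobius_add c h x) = (2 - k / d) / (k / d)"
    and S: "hyp_space c (mobius_add c h x) = (2 / (k / d)) *\<^sub>R ((1 / d) *\<^sub>R ((1 + 2*p + qx) *\<^sub>R h + (1 - qh) *\<^sub>R x))"
    by (simp_all add: hyp_time_def hyp_space_def mobius_add_eq[OF assms(1)] flip: qh_def qx_def p_def d_def)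
  moreover have "(2 - k / d) / (k / d) = 2 * d / k - 1"
    using k d by (simp add: field_simps)
  ultimately show "hyp_time c (mobius_add c h x) = 2 * (1 + 2*p + qh*qx) / ((1 - qh) * (1 - qx)) - 1"
    by (simp add: d_def k_def)
  show "hyp_space c (mobius_add c h x) = (2 / ((1 - qh) * (1 - qx))) *\<^sub>R ((1 + 2*p + qx) *\<^sub>R h + (1 - qh) *\<^sub>R x)"
    using d by (simp add: S k_def)
qed

lemma hyp_coords_mobius_add:
  fixes h x :: "'a::real_inner"
  assumes "c > 0" "norm h < c" "norm x < c"
  defines "g \<equiv> (hyp_space c h \<bullet> hyp_space c x) / c^2"
  shows "hyp_time c (mobius_add c h x) = hyp_time c h * hyp_time c x + g"
    and "hyp_space c (mobius_add c h x) =
           hyp_space c x + (g / (1 + hyp_time c h) + hyp_time c x) *\<^sub>R hyp_space c h"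
proof -
  define p where "p = (h \<bullet> x) / c^2"
  define \<alpha> where "\<alpha> = 1 - (norm h)^2 / c^2"
  define \<beta> where "\<beta> = 1 - (norm x)^2 / c^2"
  have \<alpha>: "\<alpha> > 0" and \<beta>: "\<beta> > 0"
    using norm_sq_div_less_1[OF assms(1,2)] norm_sq_div_less_1[OF assms(1,3)] by (simp_all add: \<alpha>_def \<beta>_def)
  have Th: "hyp_time c h = (2 - \<alpha>) / \<alpha>" and Tx: "hyp_time c x = (2 - \<beta>) / \<beta>"
    by (simp_all add: hyp_time_def \<alpha>_def \<beta>_def)
  have Sh: "hyp_space c h = (2 / \<alpha>) *\<^sub>R h" and Sx: "hyp_space c x = (2 / \<beta>) *\<^sub>R x"
    by (simp_all add: hyp_space_def \<alpha>_def \<beta>_def)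
  have g: "g = (2 / \<alpha>) * (2 / \<beta>) * p"
    by (simp add: g_def Sh Sx p_def)
  have "hyp_time c (mobius_add c h x) = 2 * (1 + 2*p + (1 - \<alpha>)*(1 - \<beta>)) / (\<alpha> * \<beta>) - 1"
    using hyp_coords_mobius_add_eq(1)[OF assms(1-3)] by (simp add: \<alpha>_def \<beta>_def p_def)
  also have "\<dots> = (2 - \<alpha>) / \<alpha> * ((2 - \<beta>) / \<beta>) + (2 / \<alpha>) * (2 / \<beta>) * p"
    using \<alpha> \<beta> by (simp add: field_simps)
  finally show "hyp_time c (mobius_add c h x) = hyp_time c h * hyp_time c x + g"
    unfolding Th Tx g .
  have "hyp_space c (mobius_add c h x) = (2 * (1 + 2*p + (1 - \<beta>)) / (\<alpha> * \<beta>)) *\<^sub>R h + (2 / \<beta>) *\<^sub>R x"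
    using hyp_coords_mobius_add_eq(2)[OF assms(1-3)] \<alpha>
    by (simp add: \<alpha>_def[symmetric] \<beta>_def[symmetric] p_def[symmetric] scaleR_add_right)
      (simp add: \<beta>_def)
  also have "2 * (1 + 2*p + (1 - \<beta>)) / (\<alpha> * \<beta>)
      = ((2 / \<alpha>) * (2 / \<beta>) * p / (1 + (2 - \<alpha>) / \<alpha>) + (2 - \<beta>) / \<beta>) * (2 / \<alpha>)"
    using \<alpha> \<beta> by (simp add: field_simps)
  finally show "hyp_space c (mobius_add c h x) =
      hyp_space c x + (g / (1 + hyp_time c h) + hyp_time c x) *\<^sub>R hyp_space c h"
    unfolding g Th Tx Sh Sx by (simp add: algebra_simps)
qed

lemma mobius_add_minus_cancel: "mobius_add c (- b) b = 0"
  unfolding mobius_add_def by (simp add: power2_norm_eq_inner algebra_simps)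

lemma mobius_add_0_right [simp]: "mobius_add c a 0 = a"
  unfolding mobius_add_def by simp

lemma mobius_add_left_cancel:
  fixes h x :: "'a::real_inner"
  assumes c: "c > 0" and h: "norm h < c" and x: "norm x < c"
  shows "mobius_add c h (mobius_add c (- h) x) = x"
proof -
  define y where "y = mobius_add c (- h) x"
  define Sh where "Sh = hyp_space c h"
  define Sx where "Sx = hyp_space c x"
  define Th where "Th = hyp_time c h"
  define Tx where "Tx = hyp_time c x"
  define g where "g = (Sh \<bullet> Sx) / c^2"
  have y_ball: "norm y < c" using mobius_add_in_ball[OF c _ x, of "- h"] h by (simp add: y_def)
  have Th: "Th \<ge> 1" using hyp_time_ge_1[OF c h] by (simp add: Th_def)
  have Ty: "hyp_time c y = Th * Tx - g"
    using hyp_coords_mobius_add(1)[OF c _ x, of "- h"] h by (simp add: y_def Sh_def Sx_def Th_def Tx_def g_def)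
  have Sy: "hyp_space c y = Sx + (g / (1 + Th) - Tx) *\<^sub>R Sh"
    using hyp_coords_mobius_add(2)[OF c _ x, of "- h"] h
    by (simp add: y_def Sh_def Sx_def Th_def Tx_def g_def algebra_simps)
  have Sh_Sy: "(Sh \<bullet> hyp_space c y) / c^2 = g * Th - Tx * (Th^2 - 1)"
  proof -
    have "(Sh \<bullet> hyp_space c y) / c^2 = g + (g / (1 + Th) - Tx) * ((Sh \<bullet> Sh) / c^2)"
      by (simp add: Sy g_def inner_add_right add_divide_distrib flip: times_divide_eq_right)
    also have "(Sh \<bullet> Sh) / c^2 = Th^2 - 1"
      using inner_hyp_space_self[OF c h] by (simp add: Sh_def Th_def)
    also have "g + (g / (1 + Th) - Tx) * (Th^2 - 1) = g * Th - Tx * (Th^2 - 1)"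
      using Th by (simp add: field_simps power2_eq_square)
    finally show ?thesis .
  qed
  have "hyp_time c (mobius_add c h y) = Tx"
    using hyp_coords_mobius_add(1)[OF c h y_ball] Sh_Sy
    by (simp add: Ty Sh_def Th_def power2_eq_square algebra_simps)
  moreover have "hyp_space c (mobius_add c h y) = Sx"
  proof -
    have "hyp_space c (mobius_add c h y) = hyp_space c y + ((g * Th - Tx * (Th^2 - 1)) / (1 + Th) + (Th * Tx - g)) *\<^sub>R Sh"
      using hyp_coords_mobius_add(2)[OF c h y_ball] Sh_Sy by (simp only: Sh_def Th_def Ty)
    also have "(g * Th - Tx * (Th^2 - 1)) / (1 + Th) + (Th * Tx - g) = - (g / (1 + Th) - Tx)"
      using Th by (simp add: field_simps power2_eq_square)
    finally show ?thesis by (simp add: Sy flip: scaleR_add_left)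
  qed
  ultimately show ?thesis
    unfolding y_def[symmetric]
    by (intro hyp_coords_inject[OF c mobius_add_in_ball[OF c h y_ball] x]) (simp_all add: Tx_def Sx_def)
qed

lemma mobius_sub_in_ball:
  fixes a b :: "'a::real_inner"
  assumes "c > 0" "norm a < c" "norm b < c"
  shows "norm (mobius_sub c a b) < c"
  using mobius_add_in_ball[OF assms(1,2), of "- b"] assms(3) by (simp add: mobius_sub_def)

lemma hyp_coords_mobius_sub:
  fixes a b :: "'a::real_inner"
  assumes c: "c > 0" and a: "norm a < c" and b: "norm b < c"
  defines "Ta \<equiv> hyp_time c a" and "Tb \<equiv> hyp_time c b"
    and "Sa \<equiv> hyp_space c a" and "Sb \<equiv> hyp_space c b" and "g \<equiv> (hyp_space c a \<bullet> hyp_space c b) / c^2"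
  shows "hyp_time c (mobius_sub c a b) = Ta * Tb - g"
    and "hyp_space c (mobius_sub c a b) = (Tb - g / (1 + Ta)) *\<^sub>R Sa - Sb"
    and "(hyp_space c (mobius_sub c a b) \<bullet> Sa) / c^2 = Tb * (Ta^2 - 1) - g * Ta"
proof -
  show "hyp_time c (mobius_sub c a b) = Ta * Tb - g"
    using hyp_coords_mobius_add(1)[OF c a, of "- b"] b
    by (simp add: mobius_sub_def Ta_def Tb_def g_def)
  show Sz: "hyp_space c (mobius_sub c a b) = (Tb - g / (1 + Ta)) *\<^sub>R Sa - Sb"
    using hyp_coords_mobius_add(2)[OF c a, of "- b"] b
    by (simp add: mobius_sub_def Ta_def Tb_def Sa_def Sb_def g_def algebra_simps)
  have Ta: "Ta \<ge> 1" using hyp_time_ge_1[OF c a] by (simp add: Ta_def)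
  have "(hyp_space c (mobius_sub c a b) \<bullet> Sa) / c^2 = (Tb - g / (1 + Ta)) * ((Sa \<bullet> Sa) / c^2) - g"
    by (simp add: Sz g_def Sa_def Sb_def inner_diff_left inner_diff_right inner_commute diff_divide_distrib)
  also have "(Sa \<bullet> Sa) / c^2 = Ta^2 - 1"
    using inner_hyp_space_self[OF c a] by (simp add: Sa_def Ta_def)
  also have "(Tb - g / (1 + Ta)) * (Ta^2 - 1) - g = Tb * (Ta^2 - 1) - g * Ta"
    using Ta by (simp add: field_simps power2_eq_square)
  finally show "(hyp_space c (mobius_sub c a b) \<bullet> Sa) / c^2 = Tb * (Ta^2 - 1) - g * Ta" .
qed

section \<open>Gyration and coaddition\<close>

lemma mobius_gyr_minus_self: "mobius_gyr c a (- b) b = mobius_add c (- mobius_sub c a b) a"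
  by (simp add: mobius_gyr_def mobius_sub_def mobius_add_minus_cancel)

lemma mobius_gyr_in_ball:
  fixes a b :: "'a::real_inner"
  assumes "c > 0" "norm a < c" "norm b < c"
  shows "norm (mobius_gyr c a (- b) b) < c"
  using mobius_add_in_ball[OF assms(1) _ assms(2)] mobius_sub_in_ball[OF assms]
  by (simp add: mobius_gyr_minus_self)

text \<open>The first identity says that the gyration preserves the norm.\<close>
lemma hyp_coords_mobius_gyr:
  fixes a b :: "'a::real_inner"
  assumes c: "c > 0" and a: "norm a < c" and b: "norm b < c"
  defines "Ta \<equiv> hyp_time c a" and "Tb \<equiv> hyp_time c b" and "z \<equiv> mobius_sub c a b"
  shows "hyp_time c (mobius_gyr c a (- b) b) = Tb"
    and "hyp_space c (mobius_gyr c a (- b) b) =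
           hyp_space c a - ((Ta + Tb) / (1 + hyp_time c z)) *\<^sub>R hyp_space c z"
proof -
  define g where "g = (hyp_space c a \<bullet> hyp_space c b) / c^2"
  define K where "K = Tb * (Ta^2 - 1) - g * Ta"
  have z: "norm z < c" using mobius_sub_in_ball[OF c a b] by (simp add: z_def)
  have Tz: "hyp_time c z = Ta * Tb - g" and Sz_Sa: "(hyp_space c z \<bullet> hyp_space c a) / c^2 = K"
    using hyp_coords_mobius_sub[OF c a b] by (simp_all add: z_def Ta_def Tb_def g_def K_def)
  have Tz_ge: "hyp_time c z \<ge> 1" using hyp_time_ge_1[OF c z] .
  have minus_z: "(hyp_space c (- z) \<bullet> hyp_space c a) / c^2 = - K" "norm (- z) < c"
    using Sz_Sa z by simp_all
  have "hyp_time c (mobius_gyr c a (- b) b) = hyp_time c z * Ta - K"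
    using hyp_coords_mobius_add(1)[OF c minus_z(2) a] minus_z(1)
    by (simp add: mobius_gyr_minus_self z_def[symmetric] Ta_def)
  also have "\<dots> = Tb"
    by (simp add: Tz K_def power2_eq_square algebra_simps)
  finally show "hyp_time c (mobius_gyr c a (- b) b) = Tb" .
  have "hyp_space c (mobius_gyr c a (- b) b) = hyp_space c a
      + ((hyp_space c (- z) \<bullet> hyp_space c a) / c^2 / (1 + hyp_time c (- z)) + Ta) *\<^sub>R hyp_space c (- z)"
    unfolding mobius_gyr_minus_self z_def[symmetric] Ta_def by (rule hyp_coords_mobius_add(2)[OF c minus_z(2) a])
  also have "\<dots> = hyp_space c a + (- K / (1 + hyp_time c z) + Ta) *\<^sub>R (- hyp_space c z)"
    by (subst minus_z(1)) (simp only: hyp_time_minus hyp_space_minus)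
  also have "- K / (1 + hyp_time c z) + Ta = (Ta + Tb) / (1 + hyp_time c z)"
    using Tz_ge by (simp add: Tz K_def field_simps power2_eq_square)
  finally show "hyp_space c (mobius_gyr c a (- b) b) =
      hyp_space c a - ((Ta + Tb) / (1 + hyp_time c z)) *\<^sub>R hyp_space c z"
    by simp
qed

lemma inner_hyp_space_mobius_gyr:
  fixes a b :: "'a::real_inner"
  assumes c: "c > 0" and a: "norm a < c" and b: "norm b < c"
  defines "Ta \<equiv> hyp_time c a" and "Tb \<equiv> hyp_time c b"
    and "g \<equiv> (hyp_space c a \<bullet> hyp_space c b) / c^2" and "z \<equiv> mobius_sub c a b"
  shows "(hyp_space c a \<bullet> hyp_space c (mobius_gyr c a (- b) b)) / c^2
           = Ta^2 - 1 - (Ta + Tb) / (1 + hyp_time c z) * (Tb * (Ta^2 - 1) - g * Ta)"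
proof -
  have "(hyp_space c a \<bullet> hyp_space c (mobius_gyr c a (- b) b)) / c^2
      = (hyp_space c a \<bullet> hyp_space c a) / c^2 - (Ta + Tb) / (1 + hyp_time c z) * ((hyp_space c z \<bullet> hyp_space c a) / c^2)"
    unfolding hyp_coords_mobius_gyr(2)[OF c a b, folded Ta_def Tb_def z_def]
    by (simp add: inner_diff_right inner_commute diff_divide_distrib)
  then show ?thesis
    unfolding hyp_coords_mobius_sub(3)[OF c a b, folded Ta_def Tb_def g_def z_def] inner_hyp_space_self[OF c a]
    by (simp add: Ta_def)
qed

lemma hyp_time_mobius_coadd:
  fixes a b :: "'a::real_inner"
  assumes c: "c > 0" and a: "norm a < c" and b: "norm b < c"
  defines "Ta \<equiv> hyp_time c a" and "Tb \<equiv> hyp_time c b"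
  shows "1 + hyp_time c (mobius_coadd c a b) = (Ta + Tb)^2 / (1 + hyp_time c (mobius_sub c a b))"
proof -
  define g where "g = (hyp_space c a \<bullet> hyp_space c b) / c^2"
  define w where "w = mobius_gyr c a (- b) b"
  have w: "norm w < c"
    unfolding w_def by (rule mobius_gyr_in_ball[OF c a b])
  have Tz: "hyp_time c (mobius_sub c a b) = Ta * Tb - g"
    unfolding Ta_def Tb_def g_def by (rule hyp_coords_mobius_sub(1)[OF c a b])
  have "1 + hyp_time c (mobius_coadd c a b) = 1 + Ta * Tb + (hyp_space c a \<bullet> hyp_space c w) / c^2"
    using hyp_coords_mobius_add(1)[OF c a w] hyp_coords_mobius_gyr(1)[OF c a b]
    by (simp add: mobius_coadd_def w_def Ta_def Tb_def)
  also have "(hyp_space c a \<bullet> hyp_space c w) / c^2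
      = Ta^2 - 1 - (Ta + Tb) / (1 + hyp_time c (mobius_sub c a b)) * (Tb * (Ta^2 - 1) - g * Ta)"
    unfolding w_def Ta_def Tb_def g_def by (rule inner_hyp_space_mobius_gyr[OF c a b])
  also have "1 + Ta * Tb + (Ta^2 - 1 - (Ta + Tb) / (1 + hyp_time c (mobius_sub c a b)) * (Tb * (Ta^2 - 1) - g * Ta))
      = (Ta + Tb)^2 / (1 + hyp_time c (mobius_sub c a b))"
    using hyp_time_ge_1[OF c mobius_sub_in_ball[OF c a b]]
    by (simp add: Tz field_simps power2_eq_square)
  finally show ?thesis .
qed

lemma coadd_coefficient_eq:
  fixes Ta Tb g :: real
  assumes Ta: "Ta \<ge> 1" and Tz: "1 + (Ta * Tb - g) \<noteq> 0"
  defines "\<kappa> \<equiv> (Ta + Tb) / (1 + (Ta * Tb - g))"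
  shows "1 - \<kappa> * (Tb - g / (1 + Ta)) + (Ta^2 - 1 - \<kappa> * (Tb * (Ta^2 - 1) - g * Ta)) / (1 + Ta) + Tb = \<kappa>"
proof -
  define K where "K = Tb * (Ta^2 - 1) - g * Ta"
  have "(Ta^2 - 1) / (1 + Ta) = Ta - 1"
    using Ta by (simp add: field_simps power2_eq_square)
  then have "(Ta^2 - 1 - \<kappa> * K) / (1 + Ta) = Ta - 1 - \<kappa> * (K / (1 + Ta))"
    by (simp add: diff_divide_distrib)
  then have "1 - \<kappa> * (Tb - g / (1 + Ta)) + (Ta^2 - 1 - \<kappa> * K) / (1 + Ta) + Tb
      = Ta + Tb - \<kappa> * ((Tb - g / (1 + Ta)) + K / (1 + Ta))"
    by (simp add: algebra_simps)
  also have "(Tb - g / (1 + Ta)) + K / (1 + Ta) = Ta * Tb - g"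
  proof -
    have "K = (1 + Ta) * (Tb * (Ta - 1)) - g * Ta"
      by (simp add: K_def power2_eq_square algebra_simps)
    then have "K / (1 + Ta) = Tb * (Ta - 1) - g * Ta / (1 + Ta)"
      using Ta by (simp add: diff_divide_distrib)
    moreover have "g / (1 + Ta) + g * Ta / (1 + Ta) = g"
      using Ta by (simp add: add_divide_distrib[symmetric] field_simps)
    ultimately show ?thesis
      by (simp add: algebra_simps)
  qed
  also have "Ta + Tb - \<kappa> * (Ta * Tb - g) = \<kappa>"
    using Tz by (simp add: \<kappa>_def field_simps)
  finally show ?thesis by (simp add: K_def)
qed

lemma hyp_space_mobius_coadd:
  fixes a b :: "'a::real_inner"
  assumes c: "c > 0" and a: "norm a < c" and b: "norm b < c"
  defines "Ta \<equiv> hyp_time c a" and "Tb \<equiv> hyp_time c b"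
  shows "hyp_space c (mobius_coadd c a b)
           = ((Ta + Tb) / (1 + hyp_time c (mobius_sub c a b))) *\<^sub>R (hyp_space c a + hyp_space c b)"
proof -
  define Sa where "Sa = hyp_space c a"
  define Sb where "Sb = hyp_space c b"
  define g where "g = (Sa \<bullet> Sb) / c^2"
  define \<kappa> where "\<kappa> = (Ta + Tb) / (1 + (Ta * Tb - g))"
  define \<zeta> where "\<zeta> = Tb - g / (1 + Ta)"
  define L where "L = Ta^2 - 1 - \<kappa> * (Tb * (Ta^2 - 1) - g * Ta)"
  define w where "w = mobius_gyr c a (- b) b"
  have w: "norm w < c"
    unfolding w_def by (rule mobius_gyr_in_ball[OF c a b])
  have Tz: "hyp_time c (mobius_sub c a b) = Ta * Tb - g"
    and Sz: "hyp_space c (mobius_sub c a b) = \<zeta> *\<^sub>R Sa - Sb"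
    unfolding Ta_def Tb_def Sa_def Sb_def g_def \<zeta>_def by (rule hyp_coords_mobius_sub[OF c a b])+
  have Sw: "hyp_space c w = Sa - \<kappa> *\<^sub>R (\<zeta> *\<^sub>R Sa - Sb)"
    using hyp_coords_mobius_gyr(2)[OF c a b] by (simp only: w_def Sz Tz \<kappa>_def Sa_def Ta_def Tb_def)
  have "hyp_space c (mobius_coadd c a b) = hyp_space c w + (L / (1 + Ta) + Tb) *\<^sub>R Sa"
    using hyp_coords_mobius_add(2)[OF c a w] hyp_coords_mobius_gyr(1)[OF c a b]
      inner_hyp_space_mobius_gyr[OF c a b]
    by (simp add: mobius_coadd_def w_def L_def \<kappa>_def Tz g_def Sa_def Sb_def Ta_def Tb_def)
  also have "\<dots> = (1 - \<kappa> * \<zeta> + L / (1 + Ta) + Tb) *\<^sub>R Sa + \<kappa> *\<^sub>R Sb"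
    by (simp add: Sw algebra_simps)
  also have "1 - \<kappa> * \<zeta> + L / (1 + Ta) + Tb = \<kappa>"
    using hyp_time_ge_1[OF c a] hyp_time_ge_1[OF c mobius_sub_in_ball[OF c a b]]
    unfolding \<kappa>_def \<zeta>_def L_def by (intro coadd_coefficient_eq) (simp_all add: Ta_def Tz)
  finally show ?thesis by (simp add: \<kappa>_def Tz Sa_def Sb_def scaleR_add_right)
qed

lemma mobius_coadd_hyp_coords:
  fixes a b :: "'a::real_inner"
  assumes c: "c > 0" and a: "norm a < c" and b: "norm b < c"
  shows "mobius_coadd c a b =
           (1 / (hyp_time c a + hyp_time c b)) *\<^sub>R (hyp_space c a + hyp_space c b)"
proof -
  have "norm (mobius_coadd c a b) < c"
    unfolding mobius_coadd_def by (rule mobius_add_in_ball[OF c a mobius_gyr_in_ball[OF c a b]])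
  then show ?thesis
    using scaleR_hyp_space_eq[OF c, of "mobius_coadd c a b"] hyp_time_ge_1[OF c a] hyp_time_ge_1[OF c b]
      hyp_time_ge_1[OF c mobius_sub_in_ball[OF c a b]]
    by (simp add: hyp_time_mobius_coadd[OF c a b] hyp_space_mobius_coadd[OF c a b] power2_eq_square)
qed

lemma mobius_coadd_sub_cancel:
  fixes h b :: "'a::real_inner"
  assumes c: "c > 0" and h: "norm h < c" and b: "norm b < c"
  shows "mobius_coadd c h (mobius_sub c b h) = b"
proof -
  define q where "q = mobius_sub c b h"
  define Sh where "Sh = hyp_space c h"
  define Sb where "Sb = hyp_space c b"
  define Th where "Th = hyp_time c h"
  define Tb where "Tb = hyp_time c b"
  define g where "g = (Sb \<bullet> Sh) / c^2"
  define m where "m = Th - g / (1 + Tb)"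
  have q_ball: "norm q < c"
    using mobius_sub_in_ball[OF c b h] by (simp add: q_def)
  have Tb: "Tb \<ge> 1" using hyp_time_ge_1[OF c b] by (simp add: Tb_def)
  have Tq: "hyp_time c q = Tb * Th - g" and Sq: "hyp_space c q = m *\<^sub>R Sb - Sh"
    unfolding q_def Tb_def Th_def Sb_def Sh_def g_def m_def by (rule hyp_coords_mobius_sub[OF c b h])+
  have den: "Th + hyp_time c q = (1 + Tb) * m"
    using Tb by (simp add: Tq m_def field_simps)
  moreover have "Th + hyp_time c q > 0"
    using hyp_time_ge_1[OF c h] hyp_time_ge_1[OF c q_ball] by (simp add: Th_def)
  ultimately have "m \<noteq> 0" by auto
  have "mobius_coadd c h q = (1 / (Th + hyp_time c q)) *\<^sub>R (Sh + hyp_space c q)"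
    unfolding Sh_def Th_def by (rule mobius_coadd_hyp_coords[OF c h q_ball])
  also have "\<dots> = (1 / ((1 + Tb) * m)) *\<^sub>R (m *\<^sub>R Sb)"
    by (simp add: den Sq)
  also have "\<dots> = (1 / (1 + Tb)) *\<^sub>R Sb"
    using \<open>m \<noteq> 0\<close> by simp
  also have "\<dots> = b"
    using scaleR_hyp_space_eq[OF c b] by (simp add: Sb_def Tb_def)
  finally show ?thesis by (simp add: q_def)
qed

section \<open>Moebius scalar multiplication\<close>

lemma tanh_artanh_real:
  assumes "\<bar>y\<bar> < (1::real)"
  shows "tanh (artanh y) = y"
proof -
  define X where "X = (1 + y) / (1 - y)"
  have y: "1 - y > 0" "1 + y > 0" using assms by (auto simp: abs_less_iff)
  then have X: "X > 0" by (simp add: X_def)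
  have "artanh y = ln (sqrt X)" using X by (simp add: artanh_def X_def ln_sqrt)
  then have "tanh (artanh y) = (X - 1) / (X + 1)" using X by (simp add: tanh_ln_real)
  also have "\<dots> = y" using y by (simp add: X_def field_simps)
  finally show ?thesis .
qed

lemma tanh_double_real: "tanh (2 * x) = 2 * tanh x / (1 + (tanh x)^2)" for x :: real
  using tanh_add[of x x] by (simp add: power2_eq_square mult_2[symmetric])

lemma mobius_smult_eq:
  assumes "v \<noteq> 0"
  shows "mobius_smult c r v = tanh (r * artanh (norm v / c)) *\<^sub>R ((c / norm v) *\<^sub>R v)"
  using assms by (simp add: mobius_smult_def)

lemma mobius_smult_in_ball:
  fixes v :: "'a::real_inner"
  assumes "c > 0"
  shows "norm (mobius_smult c r v) < c"
proof (cases "v = 0")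
  case True
  then show ?thesis using assms by (simp add: mobius_smult_def)
next
  case False
  have "\<bar>tanh (r * artanh (norm v / c))\<bar> < 1"
    using tanh_real_bounds[of "r * artanh (norm v / c)"] by (simp add: abs_less_iff)
  then show ?thesis
    using False assms by (simp add: mobius_smult_eq abs_mult)
qed

lemma mobius_smult_one:
  fixes v :: "'a::real_inner"
  assumes "c > 0" "norm v < c"
  shows "mobius_smult c 1 v = v"
proof (cases "v = 0")
  case True
  then show ?thesis by (simp add: mobius_smult_def)
next
  case False
  have "tanh (artanh (norm v / c)) = norm v / c"
    using assms by (intro tanh_artanh_real) simp
  then show ?thesis using False assms by (simp add: mobius_smult_eq)
qed

lemma hyp_space_div_hyp_time_half_smult:
  fixes A :: "'a::real_inner"
  assumes c: "c > 0" and A: "norm A < c"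
  defines "h \<equiv> mobius_smult c (1/2) A"
  shows "(1 / hyp_time c h) *\<^sub>R hyp_space c h = A"
proof (cases "A = 0")
  case True
  then show ?thesis by (simp add: h_def mobius_smult_def hyp_space_def)
next
  case False
  define a where "a = artanh (norm A / c)"
  define k where "k = tanh (a / 2)"
  have h: "h = k *\<^sub>R ((c / norm A) *\<^sub>R A)"
    using False by (simp add: h_def mobius_smult_eq a_def k_def)
  have hk: "(norm h)^2 / c^2 = k^2"
    using False c by (simp add: h power_mult_distrib)
  have kA: "2 * k / (1 + k^2) = norm A / c"
    using tanh_double_real[of "a / 2"] tanh_artanh_real[of "norm A / c"] c A
    by (simp add: k_def a_def)
  have "norm h < c"
    using mobius_smult_in_ball[OF c] by (simp add: h_def)
  then have "(1 / hyp_time c h) *\<^sub>R hyp_space c h = (2 / (1 + (norm h)^2 / c^2)) *\<^sub>R h"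
    by (rule hyp_space_div_hyp_time[OF c])
  also have "\<dots> = (2 * k / (1 + k^2) * (c / norm A)) *\<^sub>R A"
    unfolding hk by (simp add: h)
  finally show ?thesis
    using False c kA by simp
qed

section \<open>The curve \<open>P_AB\<close> is a Klein line\<close>

lemma abs_inner_hyp_space_less_hyp_time:
  fixes h e :: "'a::real_inner"
  assumes c: "c > 0" and h: "norm h < c" and e: "norm e = c"
  shows "\<bar>(hyp_space c h \<bullet> e) / c^2\<bar> < hyp_time c h"
proof -
  have "e \<bullet> e = c^2"
    using e by (simp flip: power2_norm_eq_inner)
  then have "(hyp_space c h \<bullet> e)^2 \<le> (hyp_space c h \<bullet> hyp_space c h) * c^2"
    using Cauchy_Schwarz_ineq[of "hyp_space c h" e] by simp
  then have "((hyp_space c h \<bullet> e) / c^2)^2 \<le> (hyp_space c h \<bullet> hyp_space c h) * c^2 / (c^2)^2"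
    by (simp add: power_divide divide_right_mono)
  also have "\<dots> = (hyp_space c h \<bullet> hyp_space c h) / c^2"
    using c by (simp add: power2_eq_square)
  finally have "((hyp_space c h \<bullet> e) / c^2)^2 \<le> (hyp_time c h)^2 - 1"
    using inner_hyp_space_self[OF c h] by simp
  then have "\<bar>(hyp_space c h \<bullet> e) / c^2\<bar>^2 < (hyp_time c h)^2"
    unfolding power2_abs by linarith
  moreover have "0 \<le> hyp_time c h" using hyp_time_ge_1[OF c h] by simp
  ultimately show ?thesis by (rule power_less_imp_less_base)
qed

lemma mobius_coadd_add_ray:
  fixes h e :: "'a::real_inner"
  assumes c: "c > 0" and h: "norm h < c" and e: "norm e = c" and \<tau>: "\<bar>\<tau>\<bar> < 1"
  defines "T \<equiv> hyp_time c h" and "S \<equiv> hyp_space c h" and "g \<equiv> (hyp_space c h \<bullet> e) / c^2"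
  shows "mobius_coadd c h (mobius_add c h (\<tau> *\<^sub>R e)) =
           (1 / (T + \<tau> * g)) *\<^sub>R (S + \<tau> *\<^sub>R (e + (g / (1 + T)) *\<^sub>R S))"
proof -
  define v where "v = \<tau> *\<^sub>R e"
  define d where "d = 1 - \<tau>^2"
  define m where "m = 2 * \<tau> / d"
  define Tv where "Tv = (2 - d) / d"
  have d: "d > 0" using \<tau> by (simp add: d_def abs_square_less_1)
  have T: "T \<ge> 1" using hyp_time_ge_1[OF c h] by (simp add: T_def)
  have nv: "norm v = \<bar>\<tau>\<bar> * c"
    by (simp add: v_def e)
  then have v: "norm v < c" and qv: "(norm v)^2 / c^2 = \<tau>^2"
    using c \<tau> by (simp_all add: power_mult_distrib)
  have Sv: "hyp_space c v = m *\<^sub>R e" and Tv: "hyp_time c v = Tv"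
    unfolding hyp_space_def hyp_time_def qv by (simp_all add: m_def Tv_def d_def v_def)
  define y where "y = mobius_add c h v"
  have y: "norm y < c" using mobius_add_in_ball[OF c h v] by (simp add: y_def)
  have Ty: "hyp_time c y = T * Tv + m * g" and Sy: "hyp_space c y = m *\<^sub>R e + (m * g / (1 + T) + Tv) *\<^sub>R S"
    using hyp_coords_mobius_add[OF c h v] by (simp_all add: y_def Sv Tv T_def S_def g_def)
  have "mobius_coadd c h y = (1 / (T + hyp_time c y)) *\<^sub>R (S + hyp_space c y)"
    unfolding T_def S_def by (rule mobius_coadd_hyp_coords[OF c h y])
  also have "\<dots> = (1 / (T + (T * Tv + m * g))) *\<^sub>R ((1 + Tv + m * g / (1 + T)) *\<^sub>R S + m *\<^sub>R e)"
    by (simp add: Ty Sy scaleR_add_left)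
  also have "T + (T * Tv + m * g) = (2 / d) * (T + \<tau> * g)"
    using d by (simp add: m_def Tv_def field_simps)
  also have "1 + Tv + m * g / (1 + T) = (2 / d) * (1 + \<tau> * (g / (1 + T)))"
    using d by (simp add: m_def Tv_def add_divide_distrib diff_divide_distrib distrib_left)
  also have "m = (2 / d) * \<tau>"
    by (simp add: m_def)
  also have "((2 / d) * (1 + \<tau> * (g / (1 + T)))) *\<^sub>R S + ((2 / d) * \<tau>) *\<^sub>R e
      = (2 / d) *\<^sub>R (S + \<tau> *\<^sub>R (e + (g / (1 + T)) *\<^sub>R S))"
    by (simp add: algebra_simps)
  also have "(1 / ((2 / d) * Y)) *\<^sub>R ((2 / d) *\<^sub>R X) = (1 / Y) *\<^sub>R X" for X :: 'a and Y
    using d by simp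
  finally show ?thesis
    by (simp only: y_def v_def)
qed

lemma scaleR_ray_eq_line:
  fixes S W :: "'a::real_vector"
  assumes "T \<noteq> 0" "T + \<tau> * g \<noteq> 0"
  shows "(1 / (T + \<tau> * g)) *\<^sub>R (S + \<tau> *\<^sub>R W) = (1 / T) *\<^sub>R S + (\<tau> / (T + \<tau> * g)) *\<^sub>R (W - (g / T) *\<^sub>R S)"
proof -
  have "1 / (T + w) = 1 / T - w / (T + w) / T" if "T + w \<noteq> 0" for w
    using assms(1) that by (simp add: divide_simps)
  from this[of "\<tau> * g"] assms(2) have coeff: "1 / T - \<tau> / (T + \<tau> * g) * (g / T) = 1 / (T + \<tau> * g)"
    by simp
  have "(1 / T) *\<^sub>R S + (\<tau> / (T + \<tau> * g)) *\<^sub>R (W - (g / T) *\<^sub>R S)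
      = (1 / T - \<tau> / (T + \<tau> * g) * (g / T)) *\<^sub>R S + (\<tau> / (T + \<tau> * g)) *\<^sub>R W"
    by (simp add: scaleR_diff_right scaleR_diff_left)
  then show ?thesis
    unfolding coeff by (simp add: scaleR_add_right)
qed

lemma mobius_coadd_add_ray_on_line:
  fixes h e :: "'a::real_inner"
  assumes c: "c > 0" and h: "norm h < c" and e: "norm e = c" and \<tau>: "\<bar>\<tau>\<bar> < 1"
  defines "T \<equiv> hyp_time c h" and "S \<equiv> hyp_space c h" and "g \<equiv> (hyp_space c h \<bullet> e) / c^2"
  shows "mobius_coadd c h (mobius_add c h (\<tau> *\<^sub>R e)) =
           (1 / T) *\<^sub>R S + (\<tau> / (T + \<tau> * g)) *\<^sub>R (e + (g / (1 + T)) *\<^sub>R S - (g / T) *\<^sub>R S)"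
proof -
  have "\<bar>\<tau> * g\<bar> \<le> \<bar>g\<bar>"
    using \<tau> by (simp add: abs_mult mult_left_le_one_le)
  moreover have "\<bar>g\<bar> < T"
    using abs_inner_hyp_space_less_hyp_time[OF c h e] by (simp add: T_def g_def)
  ultimately have "T + \<tau> * g \<noteq> 0"
    by linarith
  moreover have "T \<noteq> 0"
    using hyp_time_ge_1[OF c h] by (simp add: T_def)
  ultimately show ?thesis
    unfolding mobius_coadd_add_ray[OF c h e \<tau>, folded T_def S_def g_def]
    by (intro scaleR_ray_eq_line)
qed

lemma inner_hyp_ray:
  fixes h e :: "'a::real_inner"
  assumes c: "c > 0" and h: "norm h < c" and e: "norm e = c"
  defines "T \<equiv> hyp_time c h" and "S \<equiv> hyp_space c h" and "g \<equiv> (hyp_space c h \<bullet> e) / c^2"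
  defines "W \<equiv> e + (g / (1 + T)) *\<^sub>R S"
  shows "(S \<bullet> W) / c^2 = g * T" and "(W \<bullet> W) / c^2 = 1 + g^2"
proof -
  define k where "k = g / (1 + T)"
  have T: "T \<ge> 1" using hyp_time_ge_1[OF c h] by (simp add: T_def)
  then have g: "g = k * (1 + T)" by (simp add: k_def)
  have SS: "(S \<bullet> S) / c^2 = T^2 - 1"
    using inner_hyp_space_self[OF c h] by (simp add: S_def T_def)
  have ee: "(e \<bullet> e) / c^2 = 1"
    using e c by (simp flip: power2_norm_eq_inner)
  have "(S \<bullet> W) / c^2 = g + k * ((S \<bullet> S) / c^2)"
    by (simp add: W_def g_def S_def k_def inner_add_right add_divide_distrib)
  also have "\<dots> = g * T"
    unfolding SS g by (simp add: power2_eq_square algebra_simps)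
  finally show "(S \<bullet> W) / c^2 = g * T" .
  have "W \<bullet> W = e \<bullet> e + 2 * k * (S \<bullet> e) + k^2 * (S \<bullet> S)"
    by (simp add: W_def k_def inner_add_left inner_add_right inner_commute power2_eq_square algebra_simps)
  then have "(W \<bullet> W) / c^2 = (e \<bullet> e) / c^2 + 2 * k * g + k^2 * ((S \<bullet> S) / c^2)"
    by (simp add: g_def S_def add_divide_distrib)
  also have "\<dots> = 1 + g^2"
    unfolding SS ee g by (simp add: power2_eq_square algebra_simps)
  finally show "(W \<bullet> W) / c^2 = 1 + g^2" .
qed

lemma norm_klein_line_less_iff:
  fixes S W :: "'a::real_inner"
  assumes c: "c > 0" and T: "T > 0"
    and SS: "(S \<bullet> S) / c^2 = T^2 - 1" and SW: "(S \<bullet> W) / c^2 = g * T" and WW: "(W \<bullet> W) / c^2 = 1 + g^2"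
  shows "norm ((1 / T) *\<^sub>R S + s *\<^sub>R (W - (g / T) *\<^sub>R S)) < c \<longleftrightarrow> \<bar>s * T\<bar> < \<bar>1 - s * g\<bar>"
proof -
  define a where "a = (1 - s * g) / T"
  define x where "x = (1 / T) *\<^sub>R S + s *\<^sub>R (W - (g / T) *\<^sub>R S)"
  have "x = a *\<^sub>R S + s *\<^sub>R W"
    by (simp add: x_def a_def algebra_simps diff_divide_distrib)
  then have "(norm x)^2 = a^2 * (S \<bullet> S) + 2 * a * s * (S \<bullet> W) + s^2 * (W \<bullet> W)"
    unfolding power2_norm_eq_inner
    by (simp add: inner_add_left inner_add_right inner_commute power2_eq_square algebra_simps)
  then have "(norm x)^2 / c^2 = a^2 * ((S \<bullet> S) / c^2) + 2 * a * s * ((S \<bullet> W) / c^2) + s^2 * ((W \<bullet> W) / c^2)"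
    by (simp add: add_divide_distrib)
  also have "\<dots> = 1 + s^2 - a^2"
    unfolding SS SW WW using T by (simp add: a_def field_simps power2_eq_square)
  finally have "(norm x)^2 / c^2 = 1 + s^2 - a^2" .
  moreover have "norm x < c \<longleftrightarrow> (norm x)^2 / c^2 < 1"
    using abs_le_square_iff[of c "norm x"] c by (auto simp: not_le[symmetric])
  ultimately have "norm x < c \<longleftrightarrow> s^2 < a^2"
    by simp
  also have "\<dots> \<longleftrightarrow> (s * T)^2 < (1 - s * g)^2"
    using T by (simp add: a_def power_divide power_mult_distrib pos_less_divide_eq)
  also have "\<dots> \<longleftrightarrow> \<bar>s * T\<bar> < \<bar>1 - s * g\<bar>"
    using abs_le_square_iff[of "1 - s * g" "s * T"] by (simp add: not_le[symmetric])
  finally show ?thesis by (simp add: x_def)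
qed

lemma image_divide_affine_unit_interval:
  fixes T g :: real
  assumes "\<bar>g\<bar> < T"
  shows "(\<lambda>\<tau>. \<tau> / (T + \<tau> * g)) ` {-1<..<1} = {s. \<bar>s * T\<bar> < \<bar>1 - s * g\<bar>}"
proof safe
  fix \<tau> :: real
  assume "\<tau> \<in> {-1<..<1}"
  then have \<tau>: "\<bar>\<tau>\<bar> < 1" by (simp add: abs_less_iff)
  have "\<bar>\<tau> * g\<bar> \<le> \<bar>g\<bar>" using \<tau> by (simp add: abs_mult mult_left_le_one_le)
  then have den: "T + \<tau> * g > 0" using assms by linarith
  have "1 - \<tau> / (T + \<tau> * g) * g = T / (T + \<tau> * g)"
    using den by (simp add: field_simps)
  moreover have "\<bar>\<tau> / (T + \<tau> * g) * T\<bar> = \<bar>\<tau>\<bar> * (T / (T + \<tau> * g))"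
    using den assms by (simp add: abs_mult)
  moreover have "T / (T + \<tau> * g) > 0"
    using den assms by simp
  then have "\<bar>\<tau>\<bar> * (T / (T + \<tau> * g)) < T / (T + \<tau> * g)"
    using mult_strict_right_mono[OF \<tau>, of "T / (T + \<tau> * g)"] by simp
  ultimately show "\<bar>\<tau> / (T + \<tau> * g) * T\<bar> < \<bar>1 - \<tau> / (T + \<tau> * g) * g\<bar>"
    using den assms by simp
next
  fix s :: real
  assume s: "\<bar>s * T\<bar> < \<bar>1 - s * g\<bar>"
  then have nz: "1 - s * g \<noteq> 0" by auto
  define \<tau> where "\<tau> = s * T / (1 - s * g)"
  have "\<bar>\<tau>\<bar> < 1" using s nz by (simp add: \<tau>_def abs_divide divide_less_eq)
  moreover have "T + \<tau> * g = T / (1 - s * g)"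
    using nz by (simp add: \<tau>_def field_simps)
  then have "s = \<tau> / (T + \<tau> * g)"
    using nz assms by (simp add: \<tau>_def)
  ultimately show "s \<in> (\<lambda>\<tau>. \<tau> / (T + \<tau> * g)) ` {-1<..<1}"
    by (auto simp: abs_less_iff)
qed

lemma range_tanh_scaled:
  fixes \<theta> :: real
  assumes "\<theta> \<noteq> 0"
  shows "range (\<lambda>t. tanh (t * \<theta>)) = {-1<..<1}"
proof safe
  fix y :: real
  assume "y \<in> {-1<..<1}"
  then have "tanh (artanh y / \<theta> * \<theta>) = y"
    using assms by (simp add: tanh_artanh_real abs_less_iff)
  then show "y \<in> range (\<lambda>t. tanh (t * \<theta>))" by (metis rangeI)
qed (use tanh_real_bounds in auto)

lemma P_AB_one:
  fixes A B :: "'a::real_inner"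
  assumes c: "c > 0" and B: "norm B < c"
  shows "P_AB c A B 1 = B"
proof -
  define h where "h = mobius_smult c (1/2) A"
  have h: "norm h < c" using mobius_smult_in_ball[OF c] by (simp add: h_def)
  have Bh: "norm (mobius_sub c B h) < c"
    by (rule mobius_sub_in_ball[OF c B h])
  have u: "norm (mobius_add c (- h) (mobius_sub c B h)) < c"
    using mobius_add_in_ball[OF c _ Bh, of "- h"] h by simp
  show ?thesis
    unfolding P_AB_def Let_def h_def[symmetric] mobius_smult_one[OF c u]
      mobius_add_left_cancel[OF c h Bh] by (rule mobius_coadd_sub_cancel[OF c h B])
qed

lemma P_AB_direction_nonzero:
  fixes A B :: "'a::real_inner"
  assumes c: "c > 0" and A: "norm A < c" and B: "norm B < c" and AB: "A \<noteq> B"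
  defines "h \<equiv> mobius_smult c (1/2) A"
  shows "mobius_add c (- h) (mobius_sub c B h) \<noteq> 0"
proof
  have h: "norm h < c"
    using mobius_smult_in_ball[OF c] by (simp add: h_def)
  assume u: "mobius_add c (- h) (mobius_sub c B h) = 0"
  have "P_AB c A B 1 = mobius_coadd c h (mobius_add c h (mobius_smult c 1 (mobius_add c (- h) (mobius_sub c B h))))"
    by (simp only: P_AB_def Let_def h_def)
  also have "\<dots> = mobius_coadd c h h"
    by (simp add: u mobius_smult_def)
  also have "\<dots> = (1 / hyp_time c h) *\<^sub>R hyp_space c h"
    using mobius_coadd_hyp_coords[OF c h h] by (simp flip: scaleR_2)
  also have "\<dots> = A"
    unfolding h_def by (rule hyp_space_div_hyp_time_half_smult[OF c A])
  finally show False
    using P_AB_one[OF c B] AB by simp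
qed

lemma range_P_AB_eq_klein_line:
  fixes A B :: "'a::real_inner"
  assumes c: "c > 0" and A: "norm A < c" and B: "norm B < c" and AB: "A \<noteq> B"
  shows "\<exists>D. range (P_AB c A B) = {x. norm x < c \<and> (\<exists>s. x = A + s *\<^sub>R D)}"
proof -
  define h where "h = mobius_smult c (1/2) A"
  define u where "u = mobius_add c (- h) (mobius_sub c B h)"
  define \<theta> where "\<theta> = artanh (norm u / c)"
  define e where "e = (c / norm u) *\<^sub>R u"
  define T where "T = hyp_time c h"
  define S where "S = hyp_space c h"
  define g where "g = (S \<bullet> e) / c^2"
  define W where "W = e + (g / (1 + T)) *\<^sub>R S"
  define D where "D = W - (g / T) *\<^sub>R S"
  have h: "norm h < c" using mobius_smult_in_ball[OF c] by (simp add: h_def)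
  have u: "norm u < c" "u \<noteq> 0"
    using mobius_add_in_ball[OF c _ mobius_sub_in_ball[OF c B h], of "- h"] h
      P_AB_direction_nonzero[OF c A B AB]
    by (simp_all add: u_def h_def)
  have e: "norm e = c" using u c by (simp add: e_def)
  have "tanh \<theta> = norm u / c"
    using c u by (simp add: \<theta>_def tanh_artanh_real)
  then have \<theta>: "\<theta> \<noteq> 0" using u c by auto
  have gT: "\<bar>g\<bar> < T"
    using abs_inner_hyp_space_less_hyp_time[OF c h e] by (simp add: T_def S_def g_def)
  have A_eq: "(1 / T) *\<^sub>R S = A"
    unfolding T_def S_def h_def by (rule hyp_space_div_hyp_time_half_smult[OF c A])
  have "P_AB c A B t = A + (\<tau> / (T + \<tau> * g)) *\<^sub>R D" if "\<tau> = tanh (t * \<theta>)" for t \<tau>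
  proof -
    have "\<bar>\<tau>\<bar> < 1" using tanh_real_bounds[of "t * \<theta>"] by (simp add: that abs_less_iff)
    moreover have "P_AB c A B t = mobius_coadd c h (mobius_add c h (\<tau> *\<^sub>R e))"
      using u by (simp add: P_AB_def Let_def mobius_smult_eq that \<theta>_def e_def flip: h_def u_def)
    ultimately show ?thesis
      using mobius_coadd_add_ray_on_line[OF c h e] A_eq by (simp add: T_def S_def g_def D_def W_def)
  qed
  then have "range (P_AB c A B) = (\<lambda>s. A + s *\<^sub>R D) ` (\<lambda>\<tau>. \<tau> / (T + \<tau> * g)) ` range (\<lambda>t. tanh (t * \<theta>))"
    by (auto simp: image_iff)
  also have "\<dots> = (\<lambda>s. A + s *\<^sub>R D) ` {s. \<bar>s * T\<bar> < \<bar>1 - s * g\<bar>}"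
    by (simp only: range_tanh_scaled[OF \<theta>] image_divide_affine_unit_interval[OF gT])
  also have "\<dots> = {x. norm x < c \<and> (\<exists>s. x = A + s *\<^sub>R D)}"
    using norm_klein_line_less_iff[OF c _ _ inner_hyp_ray[OF c h e]] inner_hyp_space_self[OF c h]
      hyp_time_ge_1[OF c h]
    by (auto simp: A_eq[symmetric] D_def W_def g_def S_def T_def)
  finally show ?thesis by blast
qed

lemma ex_scaleR_line_iff:
  fixes A D :: "'a::real_vector"
  assumes "B = A + k *\<^sub>R D" "k \<noteq> 0"
  shows "(\<exists>s. x = A + s *\<^sub>R D) \<longleftrightarrow> (\<exists>s. x = A + s *\<^sub>R (B - A))"
proof
  assume "\<exists>s. x = A + s *\<^sub>R D"
  then obtain s where "x = A + s *\<^sub>R D" ..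
  then have "x = A + (s / k) *\<^sub>R (B - A)"
    using assms by simp
  then show "\<exists>s. x = A + s *\<^sub>R (B - A)" ..
next
  assume "\<exists>s. x = A + s *\<^sub>R (B - A)"
  then obtain s where "x = A + s *\<^sub>R (B - A)" ..
  then have "x = A + (s * k) *\<^sub>R D"
    using assms by simp
  then show "\<exists>s. x = A + s *\<^sub>R D" ..
qed

theorem theorem2:
  fixes c :: real and A B :: "real ^ 'n"
  assumes "c > 0" and "CARD('n) \<ge> 2"
    and "norm A < c" and "norm B < c" and "A \<noteq> B"
  shows "range (P_AB c A B) = {x. norm x < c \<and> (\<exists>s::real. x = A + s *\<^sub>R (B - A))}"
proof -
  obtain D where range: "range (P_AB c A B) = {x. norm x < c \<and> (\<exists>s. x = A + s *\<^sub>R D)}"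
    using range_P_AB_eq_klein_line[OF assms(1,3,4,5)] by blast
  have "B \<in> range (P_AB c A B)"
    using P_AB_one[OF assms(1,4)] by (metis rangeI)
  then obtain s\<^sub>B where B: "B = A + s\<^sub>B *\<^sub>R D"
    using range by auto
  moreover have "s\<^sub>B \<noteq> 0"
    using B assms(5) by auto
  ultimately show ?thesis
    using range ex_scaleR_line_iff[of B A s\<^sub>B D] by simp
qed

end
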